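(* In the continuous Donation Game, let $0\le\gamma\le b(K)-c(K)$, suppose $\lambda\ge c(K)/b(K)$, and let $p_0\in[0,1]$ satisfy $$\frac{\gamma-\lambda b(K)+c(K)}{(1-\lambda)b(K)}\le p_0\le\frac{\gamma}{(1-\lambda)b(K)}.$$ Define, for $x\in\{0,K\}$ and $y\in[0,K]$, $p(x,y)=\frac{1}{\lambda}\left(\frac{c(y)+\gamma}{b(K)}-(1-\lambda)p_0\right)$. Then $p(x,y)\in[0,1]$, and the memory-one strategy for $X$ with $\sigma_X^0=(1-p_0)\delta_0+p_0\delta_K$ and $\sigma_X[x,y]=(1-p(x,y))\delta_0+p(x,y)\delta_K$ enforces $\pi_Y=\gamma$ against every behavioral strategy of $Y$.
   Context: Continuous Donation Game: fix $K>0$ and measurable nondecreasing functions $b,c:[0,K]\to\mathbb{R}$ with $b(0)=c(0)=0$ and $b(s)>c(s)$ for $s>0$. Action spaces $S_X=S_Y=[0,K]$, payoffs $u_X(x,y)=b(y)-c(x)$, $u_Y(x,y)=b(x)-c(y)$, discount factor $\lambda\in(0,1)$. Repeated-game framework: histories $\mathcal{H}=\bigsqcup_T(S_X\times S_Y)^T$; a behavioral strategy is a Markov kernel from histories to the player's action space; a memory-one strategy for $X$ consists of an initial probability measure $\sigma_X^0$ and a Markov kernel $\sigma_X[x,y]$ applied to the previous action pair. The strategies generate, via $\mu_0=\sigma_X[\varnothing]\otimes\sigma_Y[\varnothing]$ and $\mu_t(E'\times E)=\int_{E'}(\sigma_X[h]\otimes\sigma_Y[h])(E)\,d\mu_{t-1}(h)$,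 the laws $\nu_t(E)=\mu_t(\mathcal{H}^t\times E)$ of the action pair at time $t$, and $\pi_X=(1-\lambda)\sum_t\lambda^t\int u_X\,d\nu_t$, $\pi_Y=(1-\lambda)\sum_t\lambda^t\int u_Y\,d\nu_t$. $\delta_s$ is the Dirac measure at $s$. *)

theory Defs
  imports "HOL-Probability.Probability"
begin

definition actS :: "real \<Rightarrow> real measure" where
  "actS K = restrict_space borel {0..K}"

definition pairS :: "real \<Rightarrow> (real \<times> real) measure" where
  "pairS K = actS K \<Otimes>\<^sub>M actS K"

text \<open>Histories of length T: (S_X x S_Y)^T, indices 0..T-1.  The full history space is the
  disjoint union over T, so a Markov kernel on it is the same as a family of Markov kernels
  indexed by the length T.\<close>
definition histS :: "real \<Rightarrow> nat \<Rightarrow> (nat \<Rightarrow> real \<times> real) measure" where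
  "histS K T = PiM {..<T} (\<lambda>_. pairS K)"

definition behavioral :: "real \<Rightarrow> (nat \<Rightarrow> (nat \<Rightarrow> real \<times> real) \<Rightarrow> real measure) \<Rightarrow> bool" where
  "behavioral K \<sigma> \<longleftrightarrow> (\<forall>T. \<sigma> T \<in> histS K T \<rightarrow>\<^sub>M prob_algebra (actS K))"

definition memory_one :: "real measure \<Rightarrow> (real \<Rightarrow> real \<Rightarrow> real measure)
    \<Rightarrow> nat \<Rightarrow> (nat \<Rightarrow> real \<times> real) \<Rightarrow> real measure" where
  "memory_one \<sigma>0 \<sigma> T h = (if T = 0 then \<sigma>0 else \<sigma> (fst (h (T - 1))) (snd (h (T - 1))))"

text \<open>Law of the history of length T generated by the two strategies
  (hist_law ... (Suc t) is the measure mu_t of the paper).\<close>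
primrec hist_law :: "real \<Rightarrow> (nat \<Rightarrow> (nat \<Rightarrow> real \<times> real) \<Rightarrow> real measure)
    \<Rightarrow> (nat \<Rightarrow> (nat \<Rightarrow> real \<times> real) \<Rightarrow> real measure) \<Rightarrow> nat \<Rightarrow> (nat \<Rightarrow> real \<times> real) measure" where
  "hist_law K \<sigma>X \<sigma>Y 0 = return (histS K 0) (\<lambda>_. undefined)"
| "hist_law K \<sigma>X \<sigma>Y (Suc t) =
     hist_law K \<sigma>X \<sigma>Y t \<bind>
       (\<lambda>h. distr (\<sigma>X t h \<Otimes>\<^sub>M \<sigma>Y t h) (histS K (Suc t)) (\<lambda>a. h(t := a)))"

definition action_law :: "real \<Rightarrow> (nat \<Rightarrow> (nat \<Rightarrow> real \<times> real) \<Rightarrow> real measure)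
    \<Rightarrow> (nat \<Rightarrow> (nat \<Rightarrow> real \<times> real) \<Rightarrow> real measure) \<Rightarrow> nat \<Rightarrow> (real \<times> real) measure" where
  "action_law K \<sigma>X \<sigma>Y t = distr (hist_law K \<sigma>X \<sigma>Y (Suc t)) (pairS K) (\<lambda>h. h t)"

definition disc_payoff :: "real \<Rightarrow> real \<Rightarrow> (real \<times> real \<Rightarrow> real)
    \<Rightarrow> (nat \<Rightarrow> (nat \<Rightarrow> real \<times> real) \<Rightarrow> real measure)
    \<Rightarrow> (nat \<Rightarrow> (nat \<Rightarrow> real \<times> real) \<Rightarrow> real measure) \<Rightarrow> real" where
  "disc_payoff K dsc u \<sigma>X \<sigma>Y =
     (1 - dsc) * (\<Sum>t. dsc ^ t * (\<integral>z. u z \<partial>action_law K \<sigma>X \<sigma>Y t))"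

definition uX :: "(real \<Rightarrow> real) \<Rightarrow> (real \<Rightarrow> real) \<Rightarrow> real \<times> real \<Rightarrow> real" where
  "uX b c z = b (snd z) - c (fst z)"

definition uY :: "(real \<Rightarrow> real) \<Rightarrow> (real \<Rightarrow> real) \<Rightarrow> real \<times> real \<Rightarrow> real" where
  "uY b c z = b (fst z) - c (snd z)"

definition two_point :: "real \<Rightarrow> real \<Rightarrow> real measure" where
  "two_point K q = distr (measure_pmf (bernoulli_pmf q)) (actS K) (\<lambda>\<beta>. if \<beta> then K else 0)"

end

theory Submission
  imports Defs
begin

text \<open>The strategy is a zero-determinant strategy. Whatever Y does, X plays \<open>K\<close> at time
  \<open>t+1\<close> with probability \<open>p(z\<^sub>t)\<close>, where \<open>\<delta> b(K) p(x,y) = c(y) + D\<close> with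
  \<open>D = \<gamma> - (1-\<delta>) p\<^sub>0 b(K)\<close>. Hence the expectations \<open>A\<^sub>t = E b(x\<^sub>t)\<close> and
  \<open>C\<^sub>t = E c(y\<^sub>t)\<close> satisfy \<open>\<delta> A\<^sub>t\<^sub>+\<^sub>1 = C\<^sub>t + D\<close>, so the discounted sum of Y's payoffs
  \<open>A\<^sub>t - C\<^sub>t\<close> telescopes to \<open>(1-\<delta>) A\<^sub>0 + D = \<gamma>\<close>, because \<open>A\<^sub>0 = p\<^sub>0 b(K)\<close>.\<close>

lemma integrable_bounded_prob_algebra:
  fixes f :: "'a \<Rightarrow> real"
  assumes M: "M \<in> space (prob_algebra N)" and f: "f \<in> borel_measurable N"
    and bound: "\<And>z. z \<in> space N \<Longrightarrow> \<bar>f z\<bar> \<le> B"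
  shows "integrable M f" and "\<bar>\<integral>z. f z \<partial>M\<bar> \<le> B"
proof -
  have sets: "sets M = sets N" and prob: "prob_space M"
    using M by (auto simp: space_prob_algebra)
  interpret prob_space M by (rule prob)
  have space: "space M = space N" using sets_eq_imp_space_eq[OF sets] .
  have f': "f \<in> borel_measurable M" by (subst measurable_cong_sets[OF sets refl]) (rule f)
  show int: "integrable M f"
    using bound by (intro integrable_const_bound[OF _ f', where B=B] AE_I2) (auto simp: space)
  have "\<bar>\<integral>z. f z \<partial>M\<bar> \<le> (\<integral>z. \<bar>f z\<bar> \<partial>M)" by (rule integral_abs_bound)
  also have "\<dots> \<le> (\<integral>z. B \<partial>M)"
    using bound int by (intro integral_mono) (auto simp: space)
  finally show "\<bar>\<integral>z. f z \<partial>M\<bar> \<le> B" by (simp add: prob_space)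
qed

lemma integral_fst_pair_measure:
  fixes g :: "'a \<Rightarrow> 'b::{banach, second_countable_topology}"
  assumes "prob_space M" and g: "g \<in> borel_measurable N"
  shows "(\<integral>a. g (fst a) \<partial>(N \<Otimes>\<^sub>M M)) = (\<integral>x. g x \<partial>N)"
  using integral_distr[OF measurable_fst g, of M] prob_space.distr_pair_fst[OF assms(1), of N]
  by simp

lemma space_actS [simp]: "space (actS K) = {0..K}"
  by (simp add: actS_def space_restrict_space)

lemma space_pairS [simp]: "space (pairS K) = {0..K} \<times> {0..K}"
  by (simp add: pairS_def space_pair_measure)

lemma histS_Suc: "histS K (Suc t) = PiM (insert t {..<t}) (\<lambda>_. pairS K)"
  by (simp add: histS_def lessThan_Suc)

lemma measurable_history_at: "(\<lambda>h. h t) \<in> histS K (Suc t) \<rightarrow>\<^sub>M pairS K"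
  unfolding histS_def by (rule measurable_component_singleton) simp

lemma measurable_history_extend:
  "(\<lambda>(h, a). h(t := a)) \<in> histS K t \<Otimes>\<^sub>M pairS K \<rightarrow>\<^sub>M histS K (Suc t)"
  unfolding histS_Suc unfolding histS_def
  using measurable_add_dim[of t "{..<t}" "\<lambda>_. pairS K"] by simp

lemma measurable_history_extend_by:
  "h \<in> space (histS K t) \<Longrightarrow> (\<lambda>a. h(t := a)) \<in> pairS K \<rightarrow>\<^sub>M histS K (Suc t)"
  unfolding histS_Suc unfolding histS_def by (intro measurable_component_update) auto

lemma behavioral_in_prob_algebra:
  "behavioral K \<sigma> \<Longrightarrow> h \<in> space (histS K t) \<Longrightarrow> \<sigma> t h \<in> space (prob_algebra (actS K))"
  unfolding behavioral_def by (blast dest: measurable_space)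

definition play_step :: "real \<Rightarrow> (nat \<Rightarrow> (nat \<Rightarrow> real \<times> real) \<Rightarrow> real measure)
    \<Rightarrow> (nat \<Rightarrow> (nat \<Rightarrow> real \<times> real) \<Rightarrow> real measure) \<Rightarrow> nat
    \<Rightarrow> (nat \<Rightarrow> real \<times> real) \<Rightarrow> (nat \<Rightarrow> real \<times> real) measure" where
  "play_step K \<sigma>X \<sigma>Y t h = distr (\<sigma>X t h \<Otimes>\<^sub>M \<sigma>Y t h) (histS K (Suc t)) (\<lambda>a. h(t := a))"

lemma hist_law_Suc_play_step:
  "hist_law K \<sigma>X \<sigma>Y (Suc t) = hist_law K \<sigma>X \<sigma>Y t \<bind> play_step K \<sigma>X \<sigma>Y t"
  by (simp add: play_step_def[abs_def])

lemma measurable_play_step: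
  assumes X: "behavioral K \<sigma>X" and Y: "behavioral K \<sigma>Y"
  shows "play_step K \<sigma>X \<sigma>Y t \<in> histS K t \<rightarrow>\<^sub>M prob_algebra (histS K (Suc t))"
  unfolding play_step_def[abs_def]
proof (rule measurable_distr_prob_space2[where M="pairS K"])
  show "(\<lambda>h. \<sigma>X t h \<Otimes>\<^sub>M \<sigma>Y t h) \<in> histS K t \<rightarrow>\<^sub>M prob_algebra (pairS K)"
    unfolding pairS_def using X Y by (intro measurable_pair_prob) (auto simp: behavioral_def)
qed (rule measurable_history_extend)

lemma hist_law_in_prob_algebra:
  assumes X: "behavioral K \<sigma>X" and Y: "behavioral K \<sigma>Y"
  shows "hist_law K \<sigma>X \<sigma>Y t \<in> space (prob_algebra (histS K t))"
proof (induction t)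
  case 0
  have "(\<lambda>_. undefined) \<in> space (histS K 0)"
    by (simp add: histS_def space_PiM)
  then show ?case
    using measurable_space[OF measurable_return_prob_space] by simp
next
  case (Suc t)
  note step = measurable_play_step[OF X Y, of t]
  show ?case
    unfolding hist_law_Suc_play_step space_prob_algebra
    using prob_space_bind'[OF Suc step] sets_bind'[OF Suc step] by simp
qed

lemma integral_hist_law_Suc:
  fixes f :: "real \<times> real \<Rightarrow> real"
  assumes X: "behavioral K \<sigma>X" and Y: "behavioral K \<sigma>Y"
    and f: "f \<in> borel_measurable (pairS K)"
    and bound: "\<And>z. z \<in> space (pairS K) \<Longrightarrow> \<bar>f z\<bar> \<le> B"
  shows "(\<integral>h. f (h t) \<partial>hist_law K \<sigma>X \<sigma>Y (Suc t))
       = (\<integral>h. (\<integral>a. f a \<partial>(\<sigma>X t h \<Otimes>\<^sub>M \<sigma>Y t h)) \<partial>hist_law K \<sigma>X \<sigma>Y t)"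
proof -
  let ?H = "hist_law K \<sigma>X \<sigma>Y t" and ?k = "play_step K \<sigma>X \<sigma>Y t"
  have k: "?k \<in> histS K t \<rightarrow>\<^sub>M prob_algebra (histS K (Suc t))"
    by (rule measurable_play_step[OF X Y])
  have sets_H: "sets ?H = sets (histS K t)" and "prob_space ?H"
    using hist_law_in_prob_algebra[OF X Y] by (auto simp: space_prob_algebra)
  have space_H: "space ?H = space (histS K t)"
    using sets_eq_imp_space_eq[OF sets_H] .
  have fh: "(\<lambda>h. f (h t)) \<in> borel_measurable (histS K (Suc t))"
    using measurable_compose[OF measurable_history_at f] .
  have "(\<integral>h. f (h t) \<partial>hist_law K \<sigma>X \<sigma>Y (Suc t)) = (\<integral>h. (\<integral>g. f (g t) \<partial>?k h) \<partial>?H)"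
    unfolding hist_law_Suc_play_step
  proof (rule integral_bind[where K="histS K (Suc t)" and B=B and B'=1])
    show "\<And>h. h \<in> space (histS K (Suc t)) \<Longrightarrow> \<bar>f (h t)\<bar> \<le> B"
      using bound measurable_space[OF measurable_history_at[where K=K and t=t]] by blast
    show "?k \<in> ?H \<rightarrow>\<^sub>M subprob_algebra (histS K (Suc t))"
      by (subst measurable_cong_sets[OF sets_H refl]) (rule measurable_prob_algebraD[OF k])
    show "finite_measure ?H"
      using \<open>prob_space ?H\<close> by (rule prob_space.finite_measure)
    show "AE h in ?H. emeasure (?k h) (space (?k h)) \<le> ennreal 1"
    proof (rule AE_I2)
      fix h assume "h \<in> space ?H"
      then have "prob_space (?k h)"
        using measurable_space[OF k] by (simp add: space_H space_prob_algebra)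
      then show "emeasure (?k h) (space (?k h)) \<le> ennreal 1"
        by (simp add: prob_space.emeasure_space_1)
    qed
  qed (rule fh)
  also have "\<dots> = (\<integral>h. (\<integral>a. f a \<partial>(\<sigma>X t h \<Otimes>\<^sub>M \<sigma>Y t h)) \<partial>?H)"
  proof (rule Bochner_Integration.integral_cong[OF refl])
    fix h assume "h \<in> space ?H"
    then have h: "h \<in> space (histS K t)" by (simp add: space_H)
    have "sets (\<sigma>X t h \<Otimes>\<^sub>M \<sigma>Y t h) = sets (pairS K)"
      unfolding pairS_def
      using behavioral_in_prob_algebra[OF X h] behavioral_in_prob_algebra[OF Y h]
      by (intro sets_pair_measure_cong) (simp_all add: space_prob_algebra)
    then have "(\<lambda>a. h(t := a)) \<in> (\<sigma>X t h \<Otimes>\<^sub>M \<sigma>Y t h) \<rightarrow>\<^sub>M histS K (Suc t)"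
      using measurable_history_extend_by[OF h] by (subst measurable_cong_sets) simp_all
    then show "(\<integral>g. f (g t) \<partial>?k h) = (\<integral>a. f a \<partial>(\<sigma>X t h \<Otimes>\<^sub>M \<sigma>Y t h))"
      unfolding play_step_def by (subst integral_distr[OF _ fh]) simp_all
  qed
  finally show ?thesis .
qed

lemma
  assumes X: "behavioral K \<sigma>X" and Y: "behavioral K \<sigma>Y"
  shows action_law_in_prob_algebra: "action_law K \<sigma>X \<sigma>Y t \<in> space (prob_algebra (pairS K))"
    and integral_action_law: "f \<in> borel_measurable (pairS K) \<Longrightarrow>
      (\<integral>z. f z \<partial>action_law K \<sigma>X \<sigma>Y t) = (\<integral>h. (f (h t) :: real) \<partial>hist_law K \<sigma>X \<sigma>Y (Suc t))"
proof -
  let ?H = "hist_law K \<sigma>X \<sigma>Y (Suc t)"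
  have sets_H: "sets ?H = sets (histS K (Suc t))" and prob: "prob_space ?H"
    using hist_law_in_prob_algebra[OF X Y, of "Suc t"] unfolding space_prob_algebra by blast+
  have at: "(\<lambda>h. h t) \<in> ?H \<rightarrow>\<^sub>M pairS K"
    by (subst measurable_cong_sets[OF sets_H refl]) (rule measurable_history_at)
  show "action_law K \<sigma>X \<sigma>Y t \<in> space (prob_algebra (pairS K))"
    unfolding action_law_def space_prob_algebra
    using prob_space.prob_space_distr[OF prob at] by simp
  show "(\<integral>z. f z \<partial>action_law K \<sigma>X \<sigma>Y t) = (\<integral>h. f (h t) \<partial>?H)"
    if "f \<in> borel_measurable (pairS K)"
    unfolding action_law_def by (rule integral_distr[OF at that])
qed

lemma integral_fst_action_law:
  fixes g :: "real \<Rightarrow> real"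
  assumes X: "behavioral K \<sigma>X" and Y: "behavioral K \<sigma>Y"
    and g: "g \<in> borel_measurable (actS K)" and bound: "\<And>x. x \<in> {0..K} \<Longrightarrow> \<bar>g x\<bar> \<le> B"
  shows "(\<integral>z. g (fst z) \<partial>action_law K \<sigma>X \<sigma>Y t) = (\<integral>h. (\<integral>x. g x \<partial>\<sigma>X t h) \<partial>hist_law K \<sigma>X \<sigma>Y t)"
proof -
  have gf: "(\<lambda>z. g (fst z)) \<in> borel_measurable (pairS K)"
    unfolding pairS_def by (rule measurable_compose[OF measurable_fst g])
  have gf_bound: "\<bar>g (fst z)\<bar> \<le> B" if "z \<in> space (pairS K)" for z
    using that bound by (auto simp: mem_Times_iff)
  have space_H: "space (hist_law K \<sigma>X \<sigma>Y t) = space (histS K t)"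
    using hist_law_in_prob_algebra[OF X Y]
    by (intro sets_eq_imp_space_eq) (simp add: space_prob_algebra)
  have "(\<integral>z. g (fst z) \<partial>action_law K \<sigma>X \<sigma>Y t) = (\<integral>h. g (fst (h t)) \<partial>hist_law K \<sigma>X \<sigma>Y (Suc t))"
    by (rule integral_action_law[OF X Y gf])
  also have "\<dots> = (\<integral>h. (\<integral>a. g (fst a) \<partial>(\<sigma>X t h \<Otimes>\<^sub>M \<sigma>Y t h)) \<partial>hist_law K \<sigma>X \<sigma>Y t)"
    by (rule integral_hist_law_Suc[OF X Y gf gf_bound])
  also have "\<dots> = (\<integral>h. (\<integral>x. g x \<partial>\<sigma>X t h) \<partial>hist_law K \<sigma>X \<sigma>Y t)"
  proof (rule Bochner_Integration.integral_cong[OF refl])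
    fix h assume "h \<in> space (hist_law K \<sigma>X \<sigma>Y t)"
    then have h: "h \<in> space (histS K t)" by (simp add: space_H)
    have sets_X: "sets (\<sigma>X t h) = sets (actS K)"
      using behavioral_in_prob_algebra[OF X h] by (simp add: space_prob_algebra)
    have "g \<in> borel_measurable (\<sigma>X t h)"
      by (subst measurable_cong_sets[OF sets_X refl]) (rule g)
    moreover have "prob_space (\<sigma>Y t h)"
      using behavioral_in_prob_algebra[OF Y h] by (simp add: space_prob_algebra)
    ultimately show "(\<integral>a. g (fst a) \<partial>(\<sigma>X t h \<Otimes>\<^sub>M \<sigma>Y t h)) = (\<integral>x. g x \<partial>\<sigma>X t h)"
      by (intro integral_fst_pair_measure)
  qed
  finally show ?thesis .
qed

lemma measurable_two_point_outcome:
  "K \<ge> 0 \<Longrightarrow> (\<lambda>\<beta>. if \<beta> then K else 0) \<in> measure_pmf P \<rightarrow>\<^sub>M actS K"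
  by (simp add: measurable_pmf_measure1)

lemma two_point_in_prob_algebra:
  "K \<ge> 0 \<Longrightarrow> two_point K q \<in> space (prob_algebra (actS K))"
  unfolding two_point_def space_prob_algebra
  using measurable_two_point_outcome
  by (auto intro!: prob_space.prob_space_distr prob_space_measure_pmf)

lemma integral_two_point:
  fixes g :: "real \<Rightarrow> real"
  assumes "K \<ge> 0" "0 \<le> q" "q \<le> 1" and g: "g \<in> borel_measurable (actS K)"
  shows "(\<integral>x. g x \<partial>two_point K q) = g K * q + g 0 * (1 - q)"
  unfolding two_point_def
  by (subst integral_distr[OF measurable_two_point_outcome[OF assms(1)] g]) (simp add: assms)

lemma emeasure_two_point:
  assumes "K \<ge> 0" "0 \<le> q" "q \<le> 1" and A: "A \<in> sets (actS K)"
  shows "emeasure (two_point K q) A = indicator A K * ennreal q + indicator A 0 * ennreal (1 - q)"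
proof -
  let ?o = "\<lambda>\<beta>. if \<beta> then K else 0"
  have "emeasure (two_point K q) A = emeasure (measure_pmf (bernoulli_pmf q)) (?o -` A)"
    unfolding two_point_def
    by (subst emeasure_distr[OF measurable_two_point_outcome[OF assms(1)] A]) simp
  also have "\<dots> = (\<integral>\<^sup>+\<beta>. indicator (?o -` A) \<beta> \<partial>measure_pmf (bernoulli_pmf q))"
    by (subst nn_integral_indicator) auto
  also have "\<dots> = indicator A K * ennreal q + indicator A 0 * ennreal (1 - q)"
    using assms by (subst nn_integral_bernoulli_pmf) (auto simp: indicator_def)
  finally show ?thesis .
qed

lemma measurable_two_point:
  assumes K: "K \<ge> 0" and q: "q \<in> borel_measurable M"
    and q_range: "\<And>x. x \<in> space M \<Longrightarrow> 0 \<le> q x \<and> q x \<le> 1"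
  shows "(\<lambda>x. two_point K (q x)) \<in> M \<rightarrow>\<^sub>M prob_algebra (actS K)"
proof (rule measurable_prob_algebraI)
  fix x
  show "prob_space (two_point K (q x))"
    using two_point_in_prob_algebra[OF K] by (simp add: space_prob_algebra)
next
  show "(\<lambda>x. two_point K (q x)) \<in> M \<rightarrow>\<^sub>M subprob_algebra (actS K)"
  proof (rule measurable_subprob_algebra)
    fix x
    show "subprob_space (two_point K (q x))" "sets (two_point K (q x)) = sets (actS K)"
      using two_point_in_prob_algebra[OF K]
      by (simp_all add: space_prob_algebra prob_space_imp_subprob_space)
  next
    fix A assume A: "A \<in> sets (actS K)"
    have "(\<lambda>x. indicator A K * ennreal (q x) + indicator A 0 * ennreal (1 - q x)) \<in> borel_measurable M"
      using q by measurable
    then show "(\<lambda>x. emeasure (two_point K (q x)) A) \<in> borel_measurable M"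
      by (rule measurable_cong[THEN iffD1, rotated]) (simp add: emeasure_two_point[OF K _ _ A] q_range)
  qed
qed

lemma behavioral_memory_one_two_point:
  assumes K: "K \<ge> 0"
    and q: "(\<lambda>z. q (fst z) (snd z)) \<in> borel_measurable (pairS K)"
    and q_range: "\<And>x y. x \<in> {0..K} \<Longrightarrow> y \<in> {0..K} \<Longrightarrow> 0 \<le> q x y \<and> q x y \<le> 1"
  shows "behavioral K (memory_one (two_point K p0) (\<lambda>x y. two_point K (q x y)))"
  unfolding behavioral_def
proof
  fix T show "memory_one (two_point K p0) (\<lambda>x y. two_point K (q x y)) T
      \<in> histS K T \<rightarrow>\<^sub>M prob_algebra (actS K)"
  proof (cases T)
    case 0
    then show ?thesis
      using measurable_const[OF two_point_in_prob_algebra[OF K]] by (simp add: memory_one_def[abs_def])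
  next
    case (Suc t)
    have "(\<lambda>z. two_point K (q (fst z) (snd z))) \<in> pairS K \<rightarrow>\<^sub>M prob_algebra (actS K)"
      using q_range by (intro measurable_two_point[OF K q]) auto
    from measurable_compose[OF measurable_history_at this]
    show ?thesis by (simp add: Suc memory_one_def[abs_def])
  qed
qed

lemma discounted_sum_telescoping:
  fixes A C :: "nat \<Rightarrow> real"
  assumes \<delta>: "0 < \<delta>" "\<delta> < 1" and bounded: "\<And>t. \<bar>A t\<bar> \<le> B"
    and recursion: "\<And>t. \<delta> * A (Suc t) = C t + D"
  shows "(1 - \<delta>) * (\<Sum>t. \<delta> ^ t * (A t - C t)) = (1 - \<delta>) * A 0 + D"
proof -
  have telescoped: "\<delta> ^ t * (A t - C t) = (\<delta> ^ t * A t - \<delta> ^ Suc t * A (Suc t)) + D * \<delta> ^ t" for t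
  proof -
    have "\<delta> ^ Suc t * A (Suc t) = \<delta> ^ t * (\<delta> * A (Suc t))" by simp
    then show ?thesis by (simp add: recursion algebra_simps)
  qed
  have "(\<lambda>t. \<delta> ^ t * A t) \<longlonglongrightarrow> 0"
  proof (rule Lim_null_comparison)
    show "\<forall>\<^sub>F t in sequentially. norm (\<delta> ^ t * A t) \<le> \<delta> ^ t * B"
      using bounded \<delta> by (simp add: abs_mult mult_left_mono)
    show "(\<lambda>t. \<delta> ^ t * B) \<longlonglongrightarrow> 0"
      using LIMSEQ_power_zero[of \<delta>] \<delta> by (intro tendsto_mult_left_zero) simp
  qed
  then have "(\<lambda>t. \<delta> ^ t * A t - \<delta> ^ Suc t * A (Suc t)) sums (A 0)"
    using telescope_sums'[of "\<lambda>t. \<delta> ^ t * A t" 0] by simp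
  moreover have "(\<lambda>t. D * \<delta> ^ t) sums (D / (1 - \<delta>))"
    using sums_mult[OF geometric_sums[of \<delta>], of D] \<delta> by simp
  ultimately have "(\<lambda>t. \<delta> ^ t * (A t - C t)) sums (A 0 + D / (1 - \<delta>))"
    unfolding telescoped by (rule sums_add)
  then show ?thesis using \<delta> by (simp add: sums_iff field_simps)
qed

context
  fixes K p0 :: real and q :: "real \<Rightarrow> real \<Rightarrow> real" and \<sigma>X \<sigma>Y
  assumes K: "K \<ge> 0" and p0: "0 \<le> p0" "p0 \<le> 1"
    and q: "(\<lambda>z. q (fst z) (snd z)) \<in> borel_measurable (pairS K)"
    and q_range: "\<And>x y. x \<in> {0..K} \<Longrightarrow> y \<in> {0..K} \<Longrightarrow> 0 \<le> q x y \<and> q x y \<le> 1"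
    and \<sigma>X: "\<sigma>X = memory_one (two_point K p0) (\<lambda>x y. two_point K (q x y))"
    and Y: "behavioral K \<sigma>Y"
begin

lemma behavioral_\<sigma>X: "behavioral K \<sigma>X"
  unfolding \<sigma>X using K q q_range by (rule behavioral_memory_one_two_point)

lemma
  fixes g :: "real \<Rightarrow> real"
  assumes g: "g \<in> borel_measurable (actS K)" and bound: "\<And>x. x \<in> {0..K} \<Longrightarrow> \<bar>g x\<bar> \<le> B"
    and g0: "g 0 = 0"
  shows integral_fst_action_law_memory_one_0: "(\<integral>z. g (fst z) \<partial>action_law K \<sigma>X \<sigma>Y 0) = g K * p0"
    and integral_fst_action_law_memory_one_Suc: "(\<integral>z. g (fst z) \<partial>action_law K \<sigma>X \<sigma>Y (Suc t))
          = g K * (\<integral>z. q (fst z) (snd z) \<partial>action_law K \<sigma>X \<sigma>Y t)"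
proof -
  note X = behavioral_\<sigma>X
  have law: "(\<integral>z. g (fst z) \<partial>action_law K \<sigma>X \<sigma>Y s)
      = (\<integral>h. (\<integral>x. g x \<partial>\<sigma>X s h) \<partial>hist_law K \<sigma>X \<sigma>Y s)" for s
    by (rule integral_fst_action_law[OF X Y g bound])
  have H: "hist_law K \<sigma>X \<sigma>Y s \<in> space (prob_algebra (histS K s))" for s
    by (rule hist_law_in_prob_algebra[OF X Y])
  have space_H: "space (hist_law K \<sigma>X \<sigma>Y s) = space (histS K s)" for s
    using H[of s] by (intro sets_eq_imp_space_eq) (simp add: space_prob_algebra)
  have prob_H: "prob_space (hist_law K \<sigma>X \<sigma>Y s)" for s
    using H[of s] by (simp add: space_prob_algebra)
  have "(\<integral>z. g (fst z) \<partial>action_law K \<sigma>X \<sigma>Y 0) = (\<integral>h. g K * p0 \<partial>hist_law K \<sigma>X \<sigma>Y 0)"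
    unfolding law
    by (intro Bochner_Integration.integral_cong)
       (simp_all add: \<sigma>X memory_one_def integral_two_point[OF K p0 g] g0)
  then show "(\<integral>z. g (fst z) \<partial>action_law K \<sigma>X \<sigma>Y 0) = g K * p0"
    by (simp add: prob_space.prob_space[OF prob_H] del: hist_law.simps)
  let ?q = "\<lambda>z. q (fst z) (snd z)"
  have "(\<integral>z. g (fst z) \<partial>action_law K \<sigma>X \<sigma>Y (Suc t))
      = (\<integral>h. g K * ?q (h t) \<partial>hist_law K \<sigma>X \<sigma>Y (Suc t))"
    unfolding law
  proof (intro Bochner_Integration.integral_cong[OF refl])
    fix h assume "h \<in> space (hist_law K \<sigma>X \<sigma>Y (Suc t))"
    then have "h t \<in> space (pairS K)"
      unfolding space_H by (rule measurable_space[OF measurable_history_at])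
    then show "(\<integral>x. g x \<partial>\<sigma>X (Suc t) h) = g K * ?q (h t)"
      using q_range by (auto simp: \<sigma>X memory_one_def mem_Times_iff integral_two_point[OF K _ _ g] g0)
  qed
  also have "\<dots> = (\<integral>z. g K * ?q z \<partial>action_law K \<sigma>X \<sigma>Y t)"
    using q by (intro integral_action_law[OF X Y, symmetric]) measurable
  finally show "(\<integral>z. g (fst z) \<partial>action_law K \<sigma>X \<sigma>Y (Suc t)) = g K * (\<integral>z. ?q z \<partial>action_law K \<sigma>X \<sigma>Y t)"
    by simp
qed

lemma disc_payoff_memory_one_two_point:
  fixes b c :: "real \<Rightarrow> real" and \<delta> B D :: real
  assumes \<delta>: "0 < \<delta>" "\<delta> < 1"
    and b: "b \<in> borel_measurable (actS K)" and c: "c \<in> borel_measurable (actS K)"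
    and b_bound: "\<And>y. y \<in> {0..K} \<Longrightarrow> \<bar>b y\<bar> \<le> B"
    and c_bound: "\<And>y. y \<in> {0..K} \<Longrightarrow> \<bar>c y\<bar> \<le> B"
    and b0: "b 0 = 0"
    and enforcing: "\<And>x y. x \<in> {0..K} \<Longrightarrow> y \<in> {0..K} \<Longrightarrow> \<delta> * b K * q x y = c y + D"
  shows "disc_payoff K \<delta> (uY b c) \<sigma>X \<sigma>Y = (1 - \<delta>) * b K * p0 + D"
proof -
  note X = behavioral_\<sigma>X
  let ?L = "action_law K \<sigma>X \<sigma>Y"
  define A where "A t = (\<integral>z. b (fst z) \<partial>?L t)" for t
  define C where "C t = (\<integral>z. c (snd z) \<partial>?L t)" for t
  have L: "?L t \<in> space (prob_algebra (pairS K))" for t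
    by (rule action_law_in_prob_algebra[OF X Y])
  have bf: "(\<lambda>z. b (fst z)) \<in> borel_measurable (pairS K)"
    and cs: "(\<lambda>z. c (snd z)) \<in> borel_measurable (pairS K)"
    unfolding pairS_def using b c by measurable
  have b_int: "integrable (?L t) (\<lambda>z. b (fst z))" and A_bound: "\<bar>A t\<bar> \<le> B" for t
    unfolding A_def using b_bound
    by (intro integrable_bounded_prob_algebra[OF L bf]; force simp: mem_Times_iff)+
  have c_int: "integrable (?L t) (\<lambda>z. c (snd z))" for t
    using c_bound by (intro integrable_bounded_prob_algebra[OF L cs]) (force simp: mem_Times_iff)
  have payoff: "(\<integral>z. uY b c z \<partial>?L t) = A t - C t" for t
    unfolding uY_def A_def C_def by (rule Bochner_Integration.integral_diff[OF b_int c_int])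
  have A_0: "A 0 = b K * p0"
    unfolding A_def by (rule integral_fst_action_law_memory_one_0[OF b b_bound b0])
  have recursion: "\<delta> * A (Suc t) = C t + D" for t
  proof -
    have "A (Suc t) = b K * (\<integral>z. q (fst z) (snd z) \<partial>?L t)"
      unfolding A_def by (rule integral_fst_action_law_memory_one_Suc[OF b b_bound b0])
    then have "\<delta> * A (Suc t) = (\<integral>z. \<delta> * b K * q (fst z) (snd z) \<partial>?L t)"
      by simp
    also have "\<dots> = (\<integral>z. c (snd z) + D \<partial>?L t)"
      using L[of t] enforcing
      by (intro Bochner_Integration.integral_cong)
         (auto simp: space_prob_algebra mem_Times_iff dest!: sets_eq_imp_space_eq)
    also have "\<dots> = C t + D"
    proof -
      interpret prob_space "?L t" using L[of t] by (simp add: space_prob_algebra)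
      show ?thesis unfolding C_def using c_int[of t] by (simp add: prob_space)
    qed
    finally show ?thesis .
  qed
  have "(1 - \<delta>) * (\<Sum>t. \<delta> ^ t * (A t - C t)) = (1 - \<delta>) * A 0 + D"
    using \<delta> A_bound recursion by (rule discounted_sum_telescoping)
  then show ?thesis
    by (simp add: disc_payoff_def payoff A_0)
qed

end

lemma mono_on_atLeastAtMost_bounds:
  fixes f :: "real \<Rightarrow> real"
  assumes "mono_on {0..K} f" "f 0 = 0" "y \<in> {0..K}"
  shows "0 \<le> f y \<and> f y \<le> f K"
proof -
  have "0 \<in> {0..K}" "K \<in> {0..K}" using assms(3) by auto
  then show ?thesis using assms unfolding mono_on_def by (metis atLeastAtMost_iff)
qed

lemma enforcing_probability_in_unit_interval:
  fixes bK cK cy \<gamma> \<delta> p0 :: real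
  assumes \<delta>: "0 < \<delta>" "\<delta> < 1" and bK: "0 < bK" and cy: "0 \<le> cy" "cy \<le> cK"
    and lo: "(\<gamma> - \<delta> * bK + cK) / ((1 - \<delta>) * bK) \<le> p0"
    and hi: "p0 \<le> \<gamma> / ((1 - \<delta>) * bK)"
  shows "0 \<le> (1 / \<delta>) * ((cy + \<gamma>) / bK - (1 - \<delta>) * p0)"
    and "(1 / \<delta>) * ((cy + \<gamma>) / bK - (1 - \<delta>) * p0) \<le> 1"
proof -
  have pos: "(1 - \<delta>) * bK > 0" using \<delta> bK by simp
  have "(1 - \<delta>) * p0 * bK \<le> \<gamma>" "\<gamma> + cK \<le> (\<delta> + (1 - \<delta>) * p0) * bK"
    using hi lo pos by (simp_all add: field_simps)
  then have "0 \<le> (cy + \<gamma>) - (1 - \<delta>) * p0 * bK" "(cy + \<gamma>) - (1 - \<delta>) * p0 * bK \<le> \<delta> * bK"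
    using cy by (simp_all add: algebra_simps)
  then show "0 \<le> (1 / \<delta>) * ((cy + \<gamma>) / bK - (1 - \<delta>) * p0)"
    and "(1 / \<delta>) * ((cy + \<gamma>) / bK - (1 - \<delta>) * p0) \<le> 1"
    using \<delta> bK by (simp_all add: field_simps)
qed

theorem mainTheorem10:
  fixes K \<delta> \<gamma> p0 :: real and b c :: "real \<Rightarrow> real"
    and p :: "real \<Rightarrow> real \<Rightarrow> real"
  assumes K_pos: "K > 0"
    and b_meas: "b \<in> borel_measurable (actS K)"
    and c_meas: "c \<in> borel_measurable (actS K)"
    and b_mono: "mono_on {0..K} b"
    and c_mono: "mono_on {0..K} c"
    and b0: "b 0 = 0" and c0: "c 0 = 0"
    and bc: "\<forall>s\<in>{0<..K}. b s > c s"
    and lam: "0 < \<delta>" "\<delta> < 1"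
    and gam: "0 \<le> \<gamma>" "\<gamma> \<le> b K - c K"
    and lam_ge: "\<delta> \<ge> c K / b K"
    and p0: "0 \<le> p0" "p0 \<le> 1"
    and p0_lo: "(\<gamma> - \<delta> * b K + c K) / ((1 - \<delta>) * b K) \<le> p0"
    and p0_hi: "p0 \<le> \<gamma> / ((1 - \<delta>) * b K)"
    and p_def: "p = (\<lambda>x y. (1 / \<delta>) * ((c y + \<gamma>) / b K - (1 - \<delta>) * p0))"
  shows "(\<forall>x\<in>{0, K}. \<forall>y\<in>{0..K}. 0 \<le> p x y \<and> p x y \<le> 1) \<and>
         (\<forall>\<sigma>Y. behavioral K \<sigma>Y \<longrightarrow>
            disc_payoff K \<delta> (uY b c)
              (memory_one (two_point K p0) (\<lambda>x y. two_point K (p x y))) \<sigma>Y = \<gamma>)"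
proof -
  have K: "K \<ge> 0" using K_pos by simp
  have b_range: "0 \<le> b y \<and> b y \<le> b K" and c_range: "0 \<le> c y \<and> c y \<le> c K"
    if "y \<in> {0..K}" for y
    using mono_on_atLeastAtMost_bounds[OF b_mono b0 that]
      mono_on_atLeastAtMost_bounds[OF c_mono c0 that] by auto
  have cK_lt_bK: "c K < b K" using bc K_pos by simp
  then have bK: "0 < b K" using c_range[of K] K by simp
  have p_range: "0 \<le> p x y \<and> p x y \<le> 1" if "y \<in> {0..K}" for x y
    using enforcing_probability_in_unit_interval[OF lam bK _ _ p0_lo p0_hi] c_range[OF that]
    unfolding p_def by blast
  have p_meas: "(\<lambda>z. p (fst z) (snd z)) \<in> borel_measurable (pairS K)"
    unfolding p_def pairS_def using c_meas by measurable
  have enforcing: "\<delta> * b K * p x y = c y + (\<gamma> - (1 - \<delta>) * b K * p0)" for x y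
    unfolding p_def using lam bK by (simp add: field_simps)
  have "disc_payoff K \<delta> (uY b c) (memory_one (two_point K p0) (\<lambda>x y. two_point K (p x y))) \<sigma>Y
      = (1 - \<delta>) * b K * p0 + (\<gamma> - (1 - \<delta>) * b K * p0)" if "behavioral K \<sigma>Y" for \<sigma>Y
  proof (rule disc_payoff_memory_one_two_point[OF K p0 p_meas _ refl that lam b_meas c_meas _ _ b0])
    fix y assume y: "y \<in> {0..K}"
    show "\<bar>b y\<bar> \<le> b K" using b_range[OF y] by simp
    show "\<bar>c y\<bar> \<le> b K" using c_range[OF y] cK_lt_bK by simp
  qed (use p_range enforcing in auto)
  then show ?thesis using p_range by simp
qed

end
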